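(* $\mathtt{normal}$-$\mathtt{pred}$-$\mathtt{ESO}$-$\mathtt{HORN}\subseteq\mathtt{RealTime_{OIA}}$: for every normalized predecessor Horn formula $\Phi$ there is a one-way iterative array $\mathcal A$ accepting in real time exactly the words $w\in\Sigma^+$ with $\langle w\rangle\models\Phi$.
   Context: Fix a finite alphabet $\Sigma$. A nonempty word $w=w_1\cdots w_n$ is represented by the structure $\langle w\rangle=([1,n];(Q_s)_{s\in\Sigma},\mathtt{min},\mathtt{max},\mathtt{suc},\mathtt{pred})$ with $Q_s(i)\iff w_i=s$, $\mathtt{min}(i)\iff i=1$, $\mathtt{max}(i)\iff i=n$, $\mathtt{suc}(i)=\min(i+1,n)$, $\mathtt{pred}(i)=\max(i-1,1)$; $x-1=\mathtt{pred}(x)$. A normalized predecessor Horn formula is $\Phi=\exists\mathbf{R}\forall x\forall y\,\psi(x,y)$, with $\mathbf{R}$ a finite set of binary relation symbols and $\psi$ a conjunction of clauses each of one of the forms: input clauses $\mathtt{min}(x)\wedge\mathtt{min}(y)\wedge Q_s(y)\to R(x,y)$ or $\mathtt{min}(x)\wedge\neg\mathtt{min}(y)\wedge Q_s(y)\to R(x,y)$ ($s\in\Sigma$, $R\in\mathbf{R}$); the contradiction clause $\mathtt{max}(x)\wedge\mathtt{max}(y)\wedge R_\bot(x,y)\to\bot$ for a fixed $R_\bot\in\mathbf{R}$; computation clauses $\delta_1\wedge\cdots\wedge\delta_r\to R(x,y)$ with $R\in\mathbf{R}$ and each $\delta_i$ a conjunction $S(x-1,y)\wedge\neg\mathtt{min}(x)$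 or $S(x,y-1)\wedge\neg\mathtt{min}(y)$, $S\in\mathbf{R}$. $\mathtt{normal}$-$\mathtt{pred}$-$\mathtt{ESO}$-$\mathtt{HORN}$ is the class of languages $\{w\in\Sigma^+:\langle w\rangle\models\Phi\}$ for such $\Phi$. A one-way iterative array (OIA) is a cellular automaton with finite state set $Q$, accepting states $Q_{accept}\subseteq Q$, neighborhood $\{-1,0\}$, transition function $\delta:Q^2\to Q$, and an input transition function $\delta_{input}$ for the first cell. On input $w=w_1\cdots w_n$ it uses cells $1,\dots,n$; cells outside are permanently in a state $\sharp$, cells not yet reached by information are in a quiescent state $\lambda$. Input is sequential: the letter $w_i$ is given to cell $1$ at time $i$ (the new state of cell 1 at time $i\le n$ is computed by $\delta_{input}$ from $w_i$ and the previous states); other cells are updated by $\langle c,t\rangle=\delta(\langle c-1,t-1\rangle,\langle c,t-1\rangle)$. The output cell is cell $n$, and $w$ is accepted in real time iff $\langle n,2n-1\rangle\in Q_{accept}$ (the first time at which cell $n$ has received information from all letters). $\mathtt{RealTime_{OIA}}$ is the class of languages so accepted. *)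

theory Defs
  imports Main
begin

text \<open>A nonempty word w (a list) has domain positions 1..length w;
  position i carries letter w ! (i - 1).\<close>

definition w_Q :: "'a list \<Rightarrow> 'a \<Rightarrow> nat \<Rightarrow> bool" where
  "w_Q w s i \<longleftrightarrow> w ! (i - 1) = s"

definition w_min :: "nat \<Rightarrow> bool" where
  "w_min i \<longleftrightarrow> i = 1"

definition w_max :: "'a list \<Rightarrow> nat \<Rightarrow> bool" where
  "w_max w i \<longleftrightarrow> i = length w"

definition w_pred :: "nat \<Rightarrow> nat" where
  "w_pred i = max (i - 1) 1"

text \<open>An atom of a computation clause: PredX S stands for S(x-1,y) and not min(x);
  PredY S stands for S(x,y-1) and not min(y).\<close>
datatype 'r hatom = PredX 'r | PredY 'r

text \<open>Input clause (True, s, R):  min(x) and min(y) and Q_s(y) implies R(x,y);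
      input clause (False, s, R): min(x) and not min(y) and Q_s(y) implies R(x,y).
  Computation clause (ds, R): conjunction of atoms ds implies R(x,y).\<close>
record ('a, 'r) nph_formula =
  rels :: "'r set"
  inputs :: "(bool \<times> 'a \<times> 'r) list"
  rbot :: 'r
  comps :: "('r hatom list \<times> 'r) list"

fun hatom_rel :: "'r hatom \<Rightarrow> 'r" where
  "hatom_rel (PredX S) = S" | "hatom_rel (PredY S) = S"

definition nph_wf :: "('a, 'r) nph_formula \<Rightarrow> bool" where
  "nph_wf \<Phi> \<longleftrightarrow> finite (rels \<Phi>) \<and> rbot \<Phi> \<in> rels \<Phi>
     \<and> (\<forall>(b, s, R) \<in> set (inputs \<Phi>). R \<in> rels \<Phi>)
     \<and> (\<forall>(ds, R) \<in> set (comps \<Phi>). ds \<noteq> [] \<and> R \<in> rels \<Phi>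
            \<and> (\<forall>d \<in> set ds. hatom_rel d \<in> rels \<Phi>))"

fun hatom_sat :: "('r \<Rightarrow> nat \<Rightarrow> nat \<Rightarrow> bool) \<Rightarrow> nat \<Rightarrow> nat \<Rightarrow> 'r hatom \<Rightarrow> bool" where
  "hatom_sat I x y (PredX S) \<longleftrightarrow> I S (w_pred x) y \<and> \<not> w_min x"
| "hatom_sat I x y (PredY S) \<longleftrightarrow> I S x (w_pred y) \<and> \<not> w_min y"

definition input_sat :: "'a list \<Rightarrow> ('r \<Rightarrow> nat \<Rightarrow> nat \<Rightarrow> bool) \<Rightarrow> nat \<Rightarrow> nat
     \<Rightarrow> bool \<times> 'a \<times> 'r \<Rightarrow> bool" where
  "input_sat w I x y c = (case c of (b, s, R) \<Rightarrow>
     (w_min x \<and> (if b then w_min y else \<not> w_min y) \<and> w_Q w s y \<longrightarrow> I R x y))"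

definition psi_sat :: "('a, 'r) nph_formula \<Rightarrow> 'a list \<Rightarrow> ('r \<Rightarrow> nat \<Rightarrow> nat \<Rightarrow> bool)
     \<Rightarrow> nat \<Rightarrow> nat \<Rightarrow> bool" where
  "psi_sat \<Phi> w I x y \<longleftrightarrow>
     (\<forall>c \<in> set (inputs \<Phi>). input_sat w I x y c)
   \<and> (w_max w x \<and> w_max w y \<and> I (rbot \<Phi>) x y \<longrightarrow> False)
   \<and> (\<forall>(ds, R) \<in> set (comps \<Phi>). (\<forall>d \<in> set ds. hatom_sat I x y d) \<longrightarrow> I R x y)"

definition nph_models :: "'a list \<Rightarrow> ('a, 'r) nph_formula \<Rightarrow> bool" where
  "nph_models w \<Phi> \<longleftrightarrow> (\<exists>I. \<forall>x \<in> {1..length w}. \<forall>y \<in> {1..length w}. psi_sat \<Phi> w I x y)"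

record 'a oia =
  states :: "nat set"
  accepting :: "nat set"
  delta :: "nat \<Rightarrow> nat \<Rightarrow> nat"
  delta_input :: "'a \<Rightarrow> nat \<Rightarrow> nat"
  border :: nat
  quiescent :: nat

definition oia_wf :: "'a oia \<Rightarrow> bool" where
  "oia_wf A \<longleftrightarrow> finite (states A) \<and> accepting A \<subseteq> states A
     \<and> border A \<in> states A \<and> quiescent A \<in> states A \<and> border A \<noteq> quiescent A
     \<and> (\<forall>p \<in> states A. \<forall>q \<in> states A. delta A p q \<in> states A)
     \<and> (\<forall>a. \<forall>q \<in> states A. delta_input A a q \<in> states A)
     \<and> delta A (quiescent A) (quiescent A) = quiescent A"

fun oia_cell :: "'a oia \<Rightarrow> 'a list \<Rightarrow> nat \<Rightarrow> nat \<Rightarrow> nat" where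
  "oia_cell A w c 0 = (if c = 0 then border A else quiescent A)"
| "oia_cell A w c (Suc t) =
     (if c = 0 then border A
      else if c = 1 \<and> Suc t \<le> length w then delta_input A (w ! t) (oia_cell A w 1 t)
      else delta A (oia_cell A w (c - 1) t) (oia_cell A w c t))"

definition oia_accepts_rt :: "'a oia \<Rightarrow> 'a list \<Rightarrow> bool" where
  "oia_accepts_rt A w \<longleftrightarrow>
     oia_cell A w (length w) (2 * length w - 1) \<in> accepting A"

end

theory Submission
  imports Defs
begin

text \<open>A normalized predecessor Horn formula has a least model, obtained by forward chaining
  along the grid: the relation symbols true at (x, y) are determined by those true at
  (x - 1, y) and (x, y - 1), plus the letter at position y when x = 1. Hence \<Phi> holds iff
  the contradiction symbol is not true at (n, n) in the least model. An iterative array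
  computes this model along anti-diagonals: cell c holds the set of point (c, y) at time
  c + y - 1, receiving the set of (c - 1, y) from its left neighbour and keeping its own set
  of (c, y - 1). The point (n, n) is reached by cell n at time 2n - 1, which is exactly
  real time.\<close>

fun hatom_holds_in :: "'r set \<Rightarrow> 'r set \<Rightarrow> 'r hatom \<Rightarrow> bool" where
  "hatom_holds_in X Y (PredX S) \<longleftrightarrow> S \<in> X"
| "hatom_holds_in X Y (PredY S) \<longleftrightarrow> S \<in> Y"

definition comp_consequences :: "('a, 'r) nph_formula \<Rightarrow> 'r set \<Rightarrow> 'r set \<Rightarrow> 'r set" where
  "comp_consequences \<Phi> X Y =
     {R. \<exists>ds. (ds, R) \<in> set (comps \<Phi>) \<and> (\<forall>d \<in> set ds. hatom_holds_in X Y d)}"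

definition input_consequences :: "('a, 'r) nph_formula \<Rightarrow> bool \<Rightarrow> 'a \<Rightarrow> 'r set" where
  "input_consequences \<Phi> first a = {R. (first, a, R) \<in> set (inputs \<Phi>)}"

fun least_model :: "('a, 'r) nph_formula \<Rightarrow> 'a list \<Rightarrow> nat \<Rightarrow> nat \<Rightarrow> 'r set" where
  "least_model \<Phi> w x y =
     (if x \<le> 1 then input_consequences \<Phi> (y \<le> 1) (w ! (y - 1)) else {})
     \<union> comp_consequences \<Phi> (if x \<le> 1 then {} else least_model \<Phi> w (x - 1) y)
                             (if y \<le> 1 then {} else least_model \<Phi> w x (y - 1))"

declare least_model.simps [simp del]

lemma comp_consequences_subset_rels: "nph_wf \<Phi> \<Longrightarrow> comp_consequences \<Phi> X Y \<subseteq> rels \<Phi>"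
  unfolding nph_wf_def comp_consequences_def by fastforce

lemma input_consequences_subset_rels: "nph_wf \<Phi> \<Longrightarrow> input_consequences \<Phi> b a \<subseteq> rels \<Phi>"
  unfolding nph_wf_def input_consequences_def by fastforce

lemma least_model_subset_rels: "nph_wf \<Phi> \<Longrightarrow> least_model \<Phi> w x y \<subseteq> rels \<Phi>"
  by (subst least_model.simps)
     (auto dest: comp_consequences_subset_rels input_consequences_subset_rels)

lemma w_pred_eq: "1 < x \<Longrightarrow> w_pred x = x - 1"
  by (simp add: w_pred_def)

lemma hatom_sat_least_model:
  assumes "1 \<le> x" "1 \<le> y" "hatom_sat (\<lambda>R x y. R \<in> least_model \<Phi> w x y) x y d"
  shows "hatom_holds_in (if x \<le> 1 then {} else least_model \<Phi> w (x - 1) y)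
                        (if y \<le> 1 then {} else least_model \<Phi> w x (y - 1)) d"
  using assms by (cases d) (auto simp: w_min_def w_pred_eq)

lemma psi_sat_least_model:
  assumes "x \<in> {1..length w}" "y \<in> {1..length w}"
    and "rbot \<Phi> \<notin> least_model \<Phi> w (length w) (length w)"
  shows "psi_sat \<Phi> w (\<lambda>R x y. R \<in> least_model \<Phi> w x y) x y" (is "psi_sat _ _ ?I _ _")
  unfolding psi_sat_def
proof (intro conjI ballI impI)
  fix c assume c: "c \<in> set (inputs \<Phi>)"
  obtain b s R where c_eq: "c = (b, s, R)" by (cases c)
  with c assms(2) show "input_sat w ?I x y c"
    by (subst least_model.simps)
       (auto simp: input_sat_def w_min_def w_Q_def input_consequences_def)
next
  fix dsR assume dsR: "dsR \<in> set (comps \<Phi>)"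
  obtain ds R where dsR_eq: "dsR = (ds, R)" by (cases dsR)
  have "R \<in> least_model \<Phi> w x y"
    if "\<forall>d \<in> set ds. hatom_sat (\<lambda>R x y. R \<in> least_model \<Phi> w x y) x y d"
    using that dsR dsR_eq hatom_sat_least_model[of x y \<Phi> w] assms(1,2)
    by (subst least_model.simps) (auto simp: comp_consequences_def)
  then show "case dsR of (ds, R) \<Rightarrow> (\<forall>d \<in> set ds. hatom_sat ?I x y d) \<longrightarrow> ?I R x y"
    using dsR_eq by simp
qed (use assms(3) in \<open>auto simp: w_max_def\<close>)

lemma least_model_below:
  assumes I: "\<forall>x \<in> {1..length w}. \<forall>y \<in> {1..length w}. psi_sat \<Phi> w I x y"
  shows "\<lbrakk>x \<in> {1..length w}; y \<in> {1..length w}; R \<in> least_model \<Phi> w x y\<rbrakk> \<Longrightarrow> I R x y"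
proof (induction "x + y" arbitrary: x y R rule: less_induct)
  case less
  then have psi: "psi_sat \<Phi> w I x y" using I by blast
  from less.prems(3) consider
      (input) "x = 1" "(y \<le> 1, w ! (y - 1), R) \<in> set (inputs \<Phi>)"
    | (comp) ds where "(ds, R) \<in> set (comps \<Phi>)"
        "\<forall>d \<in> set ds. hatom_holds_in (if x \<le> 1 then {} else least_model \<Phi> w (x - 1) y)
                                      (if y \<le> 1 then {} else least_model \<Phi> w x (y - 1)) d"
    using less.prems(1)
    by (subst (asm) least_model.simps)
       (auto simp: input_consequences_def comp_consequences_def split: if_splits)
  then show ?case
  proof cases
    case input
    with psi less.prems(2) show ?thesis
      by (fastforce simp: psi_sat_def input_sat_def w_min_def w_Q_def)
  next
    case comp
    have "hatom_sat I x y d" if "d \<in> set ds" for d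
    proof (cases d)
      case (PredX S)
      with comp(2) that have "1 < x" "S \<in> least_model \<Phi> w (x - 1) y"
        by (fastforce split: if_splits)+
      with less.prems(1,2) have "I S (x - 1) y" by (intro less.hyps) auto
      with \<open>1 < x\<close> PredX show ?thesis by (simp add: w_min_def w_pred_eq)
    next
      case (PredY S)
      with comp(2) that have "1 < y" "S \<in> least_model \<Phi> w x (y - 1)"
        by (fastforce split: if_splits)+
      with less.prems(1,2) have "I S x (y - 1)" by (intro less.hyps) auto
      with \<open>1 < y\<close> PredY show ?thesis by (simp add: w_min_def w_pred_eq)
    qed
    with comp(1) psi show ?thesis unfolding psi_sat_def by fast
  qed
qed

lemma nph_models_iff_least_model:
  assumes "w \<noteq> []"
  shows "nph_models w \<Phi> \<longleftrightarrow> rbot \<Phi> \<notin> least_model \<Phi> w (length w) (length w)"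
proof
  assume "nph_models w \<Phi>"
  then obtain I where I: "\<forall>x \<in> {1..length w}. \<forall>y \<in> {1..length w}. psi_sat \<Phi> w I x y"
    unfolding nph_models_def by blast
  have n: "length w \<in> {1..length w}" using assms by (simp add: Suc_leI)
  with I have "\<not> I (rbot \<Phi>) (length w) (length w)"
    unfolding psi_sat_def w_max_def by blast
  with least_model_below[OF I n n] show "rbot \<Phi> \<notin> least_model \<Phi> w (length w) (length w)"
    by blast
next
  assume "rbot \<Phi> \<notin> least_model \<Phi> w (length w) (length w)"
  then show "nph_models w \<Phi>"
    unfolding nph_models_def by (blast intro: psi_sat_least_model)
qed

definition rels_index :: "('a, 'r) nph_formula \<Rightarrow> 'r set \<Rightarrow> nat" where
  "rels_index \<Phi> = (SOME h. bij_betw h (Pow (rels \<Phi>)) {..<card (Pow (rels \<Phi>))})"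

definition state_of :: "('a, 'r) nph_formula \<Rightarrow> 'r set \<Rightarrow> nat" where
  "state_of \<Phi> S = rels_index \<Phi> S + 2"

definition rels_of_state :: "('a, 'r) nph_formula \<Rightarrow> nat \<Rightarrow> 'r set" where
  "rels_of_state \<Phi> q =
     (if q \<le> 1 then {} else inv_into (Pow (rels \<Phi>)) (rels_index \<Phi>) (q - 2))"

text \<open>The first cell recognizes the first letter (the case min(y) of the input clauses) by
  still being quiescent when it arrives.\<close>

definition horn_oia :: "('a, 'r) nph_formula \<Rightarrow> 'a oia" where
  "horn_oia \<Phi> = \<lparr>
     states = {..<card (Pow (rels \<Phi>)) + 2},
     accepting = state_of \<Phi> ` {S \<in> Pow (rels \<Phi>). rbot \<Phi> \<notin> S},
     delta = (\<lambda>p q. if p \<le> 1 then q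
                    else state_of \<Phi> (comp_consequences \<Phi> (rels_of_state \<Phi> p) (rels_of_state \<Phi> q))),
     delta_input = (\<lambda>a q. state_of \<Phi>
        (input_consequences \<Phi> (q = 1) a \<union> comp_consequences \<Phi> {} (rels_of_state \<Phi> q))),
     border = 0,
     quiescent = 1 \<rparr>"

lemma horn_oia_simps [simp]:
  "states (horn_oia \<Phi>) = {..<card (Pow (rels \<Phi>)) + 2}"
  "accepting (horn_oia \<Phi>) = state_of \<Phi> ` {S \<in> Pow (rels \<Phi>). rbot \<Phi> \<notin> S}"
  "delta (horn_oia \<Phi>) p q = (if p \<le> 1 then q
     else state_of \<Phi> (comp_consequences \<Phi> (rels_of_state \<Phi> p) (rels_of_state \<Phi> q)))"
  "delta_input (horn_oia \<Phi>) a q = state_of \<Phi>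
     (input_consequences \<Phi> (q = 1) a \<union> comp_consequences \<Phi> {} (rels_of_state \<Phi> q))"
  "border (horn_oia \<Phi>) = 0"
  "quiescent (horn_oia \<Phi>) = 1"
  by (simp_all add: horn_oia_def)

lemma oia_cell_first_Suc:
  "Suc t \<le> length w \<Longrightarrow> oia_cell A w 1 (Suc t) = delta_input A (w ! t) (oia_cell A w 1 t)"
  by simp

lemma oia_cell_Suc:
  "1 < c \<Longrightarrow> oia_cell A w c (Suc t) = delta A (oia_cell A w (c - 1) t) (oia_cell A w c t)"
  by simp

lemma cell_quiescent: "t < c \<Longrightarrow> oia_cell (horn_oia \<Phi>) w c t = 1"
  by (induction t arbitrary: c) auto

context
  fixes \<Phi> :: "('a, 'r) nph_formula"
  assumes wf: "nph_wf \<Phi>"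
begin

lemma rels_index_bij: "bij_betw (rels_index \<Phi>) (Pow (rels \<Phi>)) {..<card (Pow (rels \<Phi>))}"
proof -
  have "finite (Pow (rels \<Phi>))" using wf by (simp add: nph_wf_def)
  then have "\<exists>h. bij_betw h (Pow (rels \<Phi>)) {..<card (Pow (rels \<Phi>))}"
    using ex_bij_betw_finite_nat atLeast0LessThan by metis
  then show ?thesis unfolding rels_index_def by (rule someI_ex)
qed

lemma state_of_bounds:
  assumes "S \<subseteq> rels \<Phi>"
  shows "2 \<le> state_of \<Phi> S" "state_of \<Phi> S < card (Pow (rels \<Phi>)) + 2"
  using assms rels_index_bij unfolding state_of_def bij_betw_def by auto

lemma rels_of_state_of:
  assumes "S \<subseteq> rels \<Phi>"
  shows "rels_of_state \<Phi> (state_of \<Phi> S) = S"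
  using assms rels_index_bij unfolding rels_of_state_def state_of_def bij_betw_def by simp

lemma inj_on_state_of: "inj_on (state_of \<Phi>) (Pow (rels \<Phi>))"
  by (metis PowD inj_onI rels_of_state_of)

lemma oia_wf_horn_oia: "oia_wf (horn_oia \<Phi>)"
  using state_of_bounds(2) comp_consequences_subset_rels[OF wf]
    input_consequences_subset_rels[OF wf]
  unfolding oia_wf_def by (fastforce simp: le_supI)

lemma least_model_state:
  "rels_of_state \<Phi> (state_of \<Phi> (least_model \<Phi> w x y)) = least_model \<Phi> w x y"
  "2 \<le> state_of \<Phi> (least_model \<Phi> w x y)"
  using rels_of_state_of[OF least_model_subset_rels[OF wf]]
    state_of_bounds(1)[OF least_model_subset_rels[OF wf]] by this+

lemma cell_diagonal:
  assumes "1 \<le> c" "1 \<le> y" "y \<le> length w"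
  shows "oia_cell (horn_oia \<Phi>) w c (c + y - 1) = state_of \<Phi> (least_model \<Phi> w c y)"
  using assms
proof (induction "c + y" arbitrary: c y rule: less_induct)
  case less
  define t where "t = c + y - 2"
  define own where "own = oia_cell (horn_oia \<Phi>) w c t"
  have time: "c + y - 1 = Suc t" using less.prems unfolding t_def by simp
  have "rels_of_state \<Phi> own = (if y \<le> 1 then {} else least_model \<Phi> w c (y - 1))
    \<and> (own = 1 \<longleftrightarrow> y \<le> 1)"
  proof (cases "y \<le> 1")
    case True
    with less.prems have "own = 1" unfolding own_def t_def by (intro cell_quiescent) simp
    with True show ?thesis by (simp add: rels_of_state_def)
  next
    case False
    have "t = c + (y - 1) - 1" using False unfolding t_def by simp
    with False less.prems have "own = state_of \<Phi> (least_model \<Phi> w c (y - 1))"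
      unfolding own_def using less.hyps[of c "y - 1"] by (simp del: oia_cell.simps)
    with False least_model_state[of w c "y - 1"] show ?thesis by auto
  qed
  then have own: "rels_of_state \<Phi> own = (if y \<le> 1 then {} else least_model \<Phi> w c (y - 1))"
    "own = 1 \<longleftrightarrow> y \<le> 1"
    by simp_all
  show ?case
  proof (cases "c = 1")
    case True
    with less.prems have "oia_cell (horn_oia \<Phi>) w c (c + y - 1)
        = delta_input (horn_oia \<Phi>) (w ! (y - 1)) own"
      unfolding own_def time using oia_cell_first_Suc[of t w] by (simp add: t_def)
    also have "\<dots> = state_of \<Phi> (input_consequences \<Phi> (y \<le> 1) (w ! (y - 1))
        \<union> comp_consequences \<Phi> {} (if y \<le> 1 then {} else least_model \<Phi> w c (y - 1)))"
      by (simp only: horn_oia_simps own)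
    also have "\<dots> = state_of \<Phi> (least_model \<Phi> w c y)"
      using least_model.simps[of \<Phi> w c y] True by simp
    finally show ?thesis .
  next
    case False
    have "t = (c - 1) + y - 1" using False less.prems unfolding t_def by simp
    with False less.prems have left: "oia_cell (horn_oia \<Phi>) w (c - 1) t
        = state_of \<Phi> (least_model \<Phi> w (c - 1) y)"
      using less.hyps[of "c - 1" y] by (simp del: oia_cell.simps)
    from False less.prems have "oia_cell (horn_oia \<Phi>) w c (c + y - 1)
        = delta (horn_oia \<Phi>) (oia_cell (horn_oia \<Phi>) w (c - 1) t) own"
      unfolding own_def time by (intro oia_cell_Suc) simp
    also have "\<dots> = state_of \<Phi> (comp_consequences \<Phi> (least_model \<Phi> w (c - 1) y)
        (if y \<le> 1 then {} else least_model \<Phi> w c (y - 1)))"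
      using least_model_state(2)[of w "c - 1" y]
      by (simp only: horn_oia_simps own left least_model_state(1)) simp
    also have "\<dots> = state_of \<Phi> (least_model \<Phi> w c y)"
      using least_model.simps[of \<Phi> w c y] False less.prems by simp
    finally show ?thesis .
  qed
qed

end

theorem lemma4:
  fixes \<Phi> :: "('a::finite, 'r) nph_formula"
  assumes "nph_wf \<Phi>"
  shows "\<exists>A :: 'a oia. oia_wf A \<and>
           (\<forall>w. w \<noteq> [] \<longrightarrow> (oia_accepts_rt A w \<longleftrightarrow> nph_models w \<Phi>))"
proof (intro exI conjI allI impI)
  show "oia_wf (horn_oia \<Phi>)" using assms by (rule oia_wf_horn_oia)
next
  fix w :: "'a list"
  assume "w \<noteq> []"
  then have n: "1 \<le> length w" by (simp add: Suc_leI)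
  let ?L = "least_model \<Phi> w (length w) (length w)"
  have "oia_cell (horn_oia \<Phi>) w (length w) (2 * length w - 1) = state_of \<Phi> ?L"
    using cell_diagonal[OF assms n n order_refl] by (simp add: mult_2)
  moreover have "state_of \<Phi> ?L \<in> state_of \<Phi> ` {S \<in> Pow (rels \<Phi>). rbot \<Phi> \<notin> S}
      \<longleftrightarrow> ?L \<in> {S \<in> Pow (rels \<Phi>). rbot \<Phi> \<notin> S}"
    by (rule inj_on_image_mem_iff[OF inj_on_state_of[OF assms]])
       (use least_model_subset_rels[OF assms] in auto)
  ultimately have "oia_accepts_rt (horn_oia \<Phi>) w \<longleftrightarrow> rbot \<Phi> \<notin> ?L"
    using least_model_subset_rels[OF assms] by (simp add: oia_accepts_rt_def)
  with nph_models_iff_least_model[OF \<open>w \<noteq> []\<close>, of \<Phi>]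
  show "oia_accepts_rt (horn_oia \<Phi>) w \<longleftrightarrow> nph_models w \<Phi>" by simp
qed

end
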